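(* Consider the algorithm described in the context, and suppose it does not terminate finitely. Then: (i) for each $k\ge1$, if $J_k^Tc_k=0$ then $\tau_{k,\mathrm{trial}}=\infty$ and $\tau_k=\tau_{k-1}$; (ii) there exists a constant $\epsilon>0$ such that for every $k\ge1$ with $J_k^Tc_k\ne0$ and $\tau_k<\tau_{k-1}$ it holds that $\tau_{k-1}\ge\epsilon\|J_k^Tc_k\|_2$.
   Context: Problem: $\min_{x\in\mathbb{R}^n} f(x)+r(x)$ subject to $c(x)=0$, where $f:\mathbb{R}^n\to\mathbb{R}$ and $c:\mathbb{R}^n\to\mathbb{R}^m$ ($m\le n$) are continuously differentiable and $r:\mathbb{R}^n\to\mathbb{R}_{\ge 0}$ is convex. Write $g(x)=\nabla f(x)$, $J(x)=\nabla c(x)^T$, and $f_k=f(x_k)$, $g_k=g(x_k)$, $c_k=c(x_k)$, $J_k=J(x_k)$, $r_k=r(x_k)$. All norms are Euclidean. Merit function: $\Phi_\tau(x)=\tau(f(x)+r(x))+\|c(x)\|_2$. Algorithm: inputs $x_0$, $\alpha_0>0$, $\tau_{-1}>0$; constants $\kappa_v>0$, $\sigma_c,\epsilon_\tau,\xi,\eta\in(0,1)$, $\sigma_u\in(0,1/2]$, $\bar\sigma_u:=\sigma_u+\tfrac12$. For $k=0,1,\dots$: 1. If $J_k^Tc_k\ne0$, compute $v_k$ with $v_k\in\mathrm{Range}(J_k^T)$, $\|v_k\|_2\le\kappa_v\alpha_k\|J_k^Tc_k\|_2$, $\|c_k+J_kv_k\|_2\le\|c_k+J_kv_k^c\|_2$,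 where $v_k^c=-\beta_k^cJ_k^Tc_k$ with $\beta_k^c$ minimizing $\tfrac12\|c_k-\beta J_kJ_k^Tc_k\|_2^2$ over $0\le\beta\le\kappa_v\alpha_k$. Otherwise set $v_k=0$, and if $c_k\ne0$ terminate. 2. Let $u_k$ be the unique minimizer of $g_k^Tu+\tfrac1{2\alpha_k}\|u\|_2^2+r(x_k+v_k+u)$ subject to $J_ku=0$; set $s_k=v_k+u_k$. If $s_k=0$, terminate. 3. Let $D_k:=g_k^Ts_k+\bar\sigma_u\|s_k\|_2^2/\alpha_k+r(x_k+s_k)-r_k$; $\tau_{k,\mathrm{trial}}=\infty$ if $D_k\le0$, else $\tau_{k,\mathrm{trial}}=(1-\sigma_c)(\|c_k\|_2-\|c_k+J_kv_k\|_2)/D_k$. Set $\tau_k=\tau_{k-1}$ if $\tau_{k-1}\le\tau_{k,\mathrm{trial}}$, else $\tau_k=\min\{(1-\epsilon_\tau)\tau_{k-1},\tau_{k,\mathrm{trial}}\}$. 4. With $\Delta q_k(s,\tau):=-\tau(g_k^Ts+\tfrac1{2\alpha_k}\|s\|_2^2+r(x_k+s)-r_k)+\|c_k\|_2-\|c_k+J_ks\|_2$: if $\Phi_{\tau_k}(x_k+s_k)\le\Phi_{\tau_k}(x_k)-\eta\Delta q_k(s_k,\tau_k)$ set $x_{k+1}=x_k+s_k$, $\alpha_{k+1}=\alpha_k$; else $x_{k+1}=x_k$, $\alpha_{k+1}=\xi\alpha_k$. Standing assumption: there is an open convex set $\mathcal X$ containing all iterates $x_k$ and trial points $x_k+s_k$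 such that $f$ is bounded below on $\mathcal X$, $\nabla f$ is bounded and Lipschitz continuous on $\mathcal X$, $c$ is bounded on $\mathcal X$, $J$ is bounded and Lipschitz continuous on $\mathcal X$, and all subgradients of $r$ at points of $\mathcal X$ are uniformly bounded in norm. *)

theory Defs
  imports "HOL-Analysis.Analysis" "HOL-Library.Extended_Real"
begin

text \<open>Vectors in R^n are real^'n, constraint values in R^m are real^'m,
  the Jacobian J(x) is an m x n matrix real^'n^'m, so J(x) *v s is J s and
  transpose (J x) *v c is J^T c.\<close>

definition merit :: "real \<Rightarrow> (real^'n \<Rightarrow> real) \<Rightarrow> (real^'n \<Rightarrow> real)
    \<Rightarrow> (real^'n \<Rightarrow> real^'m) \<Rightarrow> real^'n \<Rightarrow> real" where
  "merit tau f r c x = tau * (f x + r x) + norm (c x)"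

definition u_obj :: "(real^'n \<Rightarrow> real) \<Rightarrow> (real^'n \<Rightarrow> real^'n) \<Rightarrow> real
    \<Rightarrow> real^'n \<Rightarrow> real^'n \<Rightarrow> real^'n \<Rightarrow> real" where
  "u_obj r g alpha x v u = g x \<bullet> u + (1 / (2 * alpha)) * (norm u)\<^sup>2 + r (x + v + u)"

definition D_val :: "(real^'n \<Rightarrow> real) \<Rightarrow> (real^'n \<Rightarrow> real^'n) \<Rightarrow> real \<Rightarrow> real
    \<Rightarrow> real^'n \<Rightarrow> real^'n \<Rightarrow> real" where
  "D_val r g sigma_u alpha x s =
     g x \<bullet> s + (sigma_u + 1/2) * (norm s)\<^sup>2 / alpha + r (x + s) - r x"

definition tau_trial :: "(real^'n \<Rightarrow> real) \<Rightarrow> (real^'n \<Rightarrow> real^'n)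
    \<Rightarrow> (real^'n \<Rightarrow> real^'m) \<Rightarrow> (real^'n \<Rightarrow> real^'n^'m) \<Rightarrow> real \<Rightarrow> real \<Rightarrow> real
    \<Rightarrow> real^'n \<Rightarrow> real^'n \<Rightarrow> real^'n \<Rightarrow> ereal" where
  "tau_trial r g c J sigma_c sigma_u alpha x v s =
     (if D_val r g sigma_u alpha x s \<le> 0 then \<infinity>
      else ereal ((1 - sigma_c) * (norm (c x) - norm (c x + J x *v v))
                  / D_val r g sigma_u alpha x s))"

definition tau_update :: "real \<Rightarrow> real \<Rightarrow> ereal \<Rightarrow> real" where
  "tau_update eps_tau tau_prev trial =
     (if ereal tau_prev \<le> trial then tau_prev
      else min ((1 - eps_tau) * tau_prev) (real_of_ereal trial))"

definition delta_q :: "(real^'n \<Rightarrow> real) \<Rightarrow> (real^'n \<Rightarrow> real^'n)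
    \<Rightarrow> (real^'n \<Rightarrow> real^'m) \<Rightarrow> (real^'n \<Rightarrow> real^'n^'m) \<Rightarrow> real
    \<Rightarrow> real^'n \<Rightarrow> real^'n \<Rightarrow> real \<Rightarrow> real" where
  "delta_q r g c J alpha x s tau =
     - tau * (g x \<bullet> s + (1 / (2 * alpha)) * (norm s)\<^sup>2 + r (x + s) - r x)
     + norm (c x) - norm (c x + J x *v s)"

definition is_subgrad :: "(real^'n \<Rightarrow> real) \<Rightarrow> real^'n \<Rightarrow> real^'n \<Rightarrow> bool" where
  "is_subgrad r x z \<longleftrightarrow> (\<forall>y. r y \<ge> r x + z \<bullet> (y - x))"

end

theory Submission
  imports Defs
begin

text \<open>
  If J_k^T c_k = 0, the normal step vanishes and optimality of u_k for the strongly convex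
  tangential subproblem gives g_k^T u_k + |u_k|^2/alpha_k + r(x_k + u_k) - r(x_k) <= 0, hence
  D_k <= 0 and tau_trial = infinity.

  Otherwise, the first-order condition of the tangential subproblem yields a subgradient z of r
  at x_k + s_k with z + g_k + u_k/alpha_k orthogonal to null(J_k). As v_k is orthogonal to u_k,
  this bounds D_k by (|g_k| + B)|v_k| + |v_k|^2/alpha_k = O(alpha_k |J_k^T c_k|). The Cauchy
  step makes |c_k| - |c_k + J_k v_k| at least of order min(kappa_v alpha_k, 1/|J_k|^2) |J_k^T c_k|^2.
  If tau decreases, then tau_{k-1} > tau_trial, and in that quotient the factors alpha_k <= alpha_0
  cancel, leaving a multiple of |J_k^T c_k|.
\<close>

lemma norm_matrix_vector_mult_le:
  fixes A :: "real^'n^'m"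
  shows "norm (A *v x) \<le> norm A * norm x"
proof -
  have "norm (A *v x) \<le> norm (\<chi> i. norm (A $ i) * norm x)"
    by (rule norm_le_componentwise_cart) (simp add: matrix_mult_dot Cauchy_Schwarz_ineq2)
  also have "\<dots> = norm A * norm x"
    by (simp add: norm_vec_def L2_set_left_distrib)
  finally show ?thesis .
qed

lemma norm_transpose:
  fixes A :: "real^'n^'m"
  shows "norm (transpose A) = norm A"
  unfolding norm_eq_sqrt_inner inner_vec_def transpose_def
  by (simp add: sum.swap[of _ "UNIV :: 'm set"])

lemma convex_strict_epigraph:
  fixes f :: "'a::real_vector \<Rightarrow> real"
  assumes "convex_on UNIV f"
  shows "convex {p. f (fst p) < snd p}"
proof (rule convexI, clarsimp)
  fix x y :: 'a and s t a b :: real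
  assume "f x < s" "f y < t" "0 \<le> a" "0 \<le> b" "a + b = 1"
  moreover from this have "a * f x + b * f y < a * s + b * t"
    by (cases "a = 0") (auto intro!: add_less_le_mono mult_strict_left_mono mult_left_mono)
  ultimately show "f (a *\<^sub>R x + b *\<^sub>R y) < a * s + b * t"
    using assms unfolding convex_on_def by (smt (verit) UNIV_I)
qed

lemma convex_graph_of_affine_on_subspace:
  fixes q :: "'a::real_inner"
  assumes "subspace N"
  shows "convex ((\<lambda>d. (y + d, c - q \<bullet> d)) ` N)"
proof -
  have "(\<lambda>d. (y + d, c - q \<bullet> d)) ` N = (+) (y, c) ` (\<lambda>d. (d, - (q \<bullet> d))) ` N"
    by (simp add: image_image)
  moreover have "linear (\<lambda>d. (d, - (q \<bullet> d)))"
    by (auto simp: linear_iff inner_add_right)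
  ultimately show ?thesis
    using assms by (metis convex_translation convex_linear_image subspace_imp_convex)
qed

lemma affine_minorant_above_affine_graph:
  fixes r :: "'a::euclidean_space \<Rightarrow> real"
  assumes r: "convex_on UNIV r" and N: "subspace N"
    and opt: "\<And>d. d \<in> N \<Longrightarrow> r y \<le> r (y + d) + q \<bullet> d"
  obtains p \<beta> where "\<And>x. p \<bullet> x + \<beta> \<le> r x"
    "\<And>d. d \<in> N \<Longrightarrow> r y - q \<bullet> d \<le> p \<bullet> (y + d) + \<beta>"
proof -
  \<comment> \<open>The strict epigraph is disjoint from the graph, which touches the closed epigraph at (y, r y).\<close>
  let ?S = "{p. r (fst p) < snd p}" and ?T = "(\<lambda>d. (y + d, r y - q \<bullet> d)) ` N"
  have "?S \<inter> ?T = {}"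
    using opt by force
  moreover have "(y, r y + 1) \<in> ?S" "(y, r y) \<in> ?T"
    using subspace_0[OF N] by force+
  ultimately obtain a b where "a \<noteq> 0" "\<forall>p\<in>?S. a \<bullet> p \<le> b" "\<forall>p\<in>?T. b \<le> a \<bullet> p"
    using separating_hyperplane_sets[OF convex_strict_epigraph[OF r]
        convex_graph_of_affine_on_subspace[OF N]] by blast
  moreover obtain a1 a0 where "a = (a1, a0)" by fastforce
  ultimately have a_ne: "a1 \<noteq> 0 \<or> a0 \<noteq> 0"
    and above: "\<And>x t. r x < t \<Longrightarrow> a1 \<bullet> x + a0 * t \<le> b"
    and below: "\<And>d. d \<in> N \<Longrightarrow> b \<le> a1 \<bullet> (y + d) + a0 * (r y - q \<bullet> d)"
    by (auto simp: zero_prod_def)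
  have below0: "b \<le> a1 \<bullet> y + a0 * r y"
    using below[OF subspace_0[OF N]] by simp
  have "a0 \<le> 0"
    using above[of y "r y + 1"] below0 by (simp add: algebra_simps)
  moreover have "a0 \<noteq> 0"
  proof
    assume "a0 = 0"
    then have "a1 \<bullet> a1 \<le> 0"
      using above[of "y + a1" "r (y + a1) + 1"] below0 by (simp add: inner_add_right)
    with \<open>a0 = 0\<close> a_ne show False
      using inner_gt_zero_iff[of a1] by linarith
  qed
  ultimately have a0: "a0 < 0" by simp
  have epi: "a1 \<bullet> x + a0 * r x \<le> b" for x
  proof (rule field_le_epsilon)
    fix e :: real assume "0 < e"
    moreover have "a0 * (r x + e / - a0) = a0 * r x - e"
      using a0 by (simp add: field_simps)
    ultimately show "a1 \<bullet> x + a0 * r x \<le> b + e"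
      using above[of x "r x + e / - a0"] a0 by (simp add: divide_pos_neg)
  qed
  show thesis
  proof (rule that[of "(- 1 / a0) *\<^sub>R a1" "b / a0"])
    show "(- 1 / a0) *\<^sub>R a1 \<bullet> x + b / a0 \<le> r x" for x
      using epi[of x] a0 by (simp add: field_simps)
    show "r y - q \<bullet> d \<le> (- 1 / a0) *\<^sub>R a1 \<bullet> (y + d) + b / a0" if "d \<in> N" for d
      using below[OF that] a0 by (simp add: field_simps)
  qed
qed

lemma is_subgrad_exists_orthogonal:
  fixes r :: "real^'n \<Rightarrow> real"
  assumes r: "convex_on UNIV r" and N: "subspace N"
    and opt: "\<And>d. d \<in> N \<Longrightarrow> r y \<le> r (y + d) + q \<bullet> d"
  shows "\<exists>z. is_subgrad r y z \<and> (\<forall>d\<in>N. (z + q) \<bullet> d = 0)"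
proof -
  obtain p \<beta> where minorant: "\<And>x. p \<bullet> x + \<beta> \<le> r x"
    and above: "\<And>d. d \<in> N \<Longrightarrow> r y - q \<bullet> d \<le> p \<bullet> (y + d) + \<beta>"
    using affine_minorant_above_affine_graph[OF r N opt] by blast
  have "is_subgrad r y p"
    unfolding is_subgrad_def
  proof
    fix x
    have "r y \<le> p \<bullet> y + \<beta>"
      using above[OF subspace_0[OF N]] by simp
    then show "r y + p \<bullet> (x - y) \<le> r x"
      using minorant[of x] by (simp add: inner_diff_right)
  qed
  moreover have "(p + q) \<bullet> d = 0" if "d \<in> N" for d
    using above[OF that] above[OF subspace_neg[OF N that]] minorant[of y]
    by (simp add: inner_add_left inner_add_right inner_diff_right)
  ultimately show ?thesis by blast
qed

lemma nonneg_of_nonneg_add_mult_small: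
  fixes a b :: real
  assumes "\<And>t. 0 < t \<Longrightarrow> t \<le> 1 \<Longrightarrow> 0 \<le> a + t * b"
  shows "0 \<le> a"
proof -
  have "0 \<le> a + e" if "0 < e" for e
  proof -
    define t where "t = min 1 (e / (\<bar>b\<bar> + 1))"
    have t: "0 < t" "t \<le> 1"
      using that by (auto simp: t_def)
    have "t * b \<le> t * \<bar>b\<bar>"
      using t by (simp add: mult_left_mono)
    also have "\<dots> \<le> e / (\<bar>b\<bar> + 1) * \<bar>b\<bar>"
      unfolding t_def by (intro mult_right_mono) auto
    also have "\<dots> \<le> e"
      using that by (simp add: field_simps)
    finally show ?thesis
      using assms[OF t] by linarith
  qed
  then show ?thesis
    by (metis add.left_neutral field_le_epsilon)
qed

lemma prox_subspace_first_order:
  fixes q y u :: "'a::real_inner" and r :: "'a \<Rightarrow> real"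
  assumes r: "convex_on UNIV r" and \<alpha>: "\<alpha> > 0" and N: "subspace N" and "u \<in> N" "d \<in> N"
    and min: "\<And>w. w \<in> N \<Longrightarrow>
      q \<bullet> u + 1 / (2 * \<alpha>) * (norm u)\<^sup>2 + r (y + u)
        \<le> q \<bullet> w + 1 / (2 * \<alpha>) * (norm w)\<^sup>2 + r (y + w)"
  shows "r (y + u) \<le> r (y + u + d) + (q + (1 / \<alpha>) *\<^sub>R u) \<bullet> d"
proof -
  define a where "a = (q + (1 / \<alpha>) *\<^sub>R u) \<bullet> d + r (y + u + d) - r (y + u)"
  have "0 \<le> a + t * ((norm d)\<^sup>2 / (2 * \<alpha>))" if t: "0 < t" "t \<le> 1" for t
  proof -
    have "u + t *\<^sub>R d \<in> N"
      using N \<open>u \<in> N\<close> \<open>d \<in> N\<close> by (simp add: subspace_add subspace_scale)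
    note min[OF this]
    moreover have "(norm (u + t *\<^sub>R d))\<^sup>2 = (norm u)\<^sup>2 + 2 * t * (u \<bullet> d) + t\<^sup>2 * (norm d)\<^sup>2"
      unfolding power2_norm_eq_inner
      by (simp add: inner_add_left inner_add_right inner_commute algebra_simps power2_eq_square)
    ultimately have "q \<bullet> u + 1 / (2 * \<alpha>) * (norm u)\<^sup>2 + r (y + u)
        \<le> q \<bullet> u + t * (q \<bullet> d)
          + 1 / (2 * \<alpha>) * ((norm u)\<^sup>2 + 2 * t * (u \<bullet> d) + t\<^sup>2 * (norm d)\<^sup>2) + r (y + (u + t *\<^sub>R d))"
      by (simp add: inner_add_right)
    moreover have "r (y + (u + t *\<^sub>R d)) \<le> (1 - t) * r (y + u) + t * r (y + u + d)"
      using convex_onD[OF r, of t "y + u" "y + u + d"] t by (simp add: algebra_simps)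
    ultimately have "0 \<le> t * (q \<bullet> d) + 1 / (2 * \<alpha>) * (2 * t * (u \<bullet> d) + t\<^sup>2 * (norm d)\<^sup>2)
        + t * (r (y + u + d) - r (y + u))"
      by (simp add: algebra_simps)
    also have "\<dots> = t * (a + t * ((norm d)\<^sup>2 / (2 * \<alpha>)))"
      unfolding a_def using \<alpha> by (simp add: inner_add_left field_simps power2_eq_square)
    finally show ?thesis
      using t by (simp add: zero_le_mult_iff)
  qed
  then have "0 \<le> a"
    by (rule nonneg_of_nonneg_add_mult_small)
  then show ?thesis
    unfolding a_def by simp
qed

lemma D_val_le:
  fixes r :: "real^'n \<Rightarrow> real" and Jx :: "real^'n^'m"
  assumes r: "convex_on UNIV r" and \<alpha>: "\<alpha> > 0" and sigma_u: "sigma_u \<le> 1/2"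
    and u: "Jx *v u = 0" and v: "v \<in> range (\<lambda>y. transpose Jx *v y)"
    and min: "\<And>w. Jx *v w = 0 \<Longrightarrow> u_obj r g \<alpha> x v u \<le> u_obj r g \<alpha> x v w"
    and B: "\<And>z. is_subgrad r (x + (v + u)) z \<Longrightarrow> norm z \<le> B"
  shows "D_val r g sigma_u \<alpha> x (v + u) \<le> (norm (g x) + B) * norm v + (norm v)\<^sup>2 / \<alpha>"
proof -
  define N where "N = {d. Jx *v d = 0}"
  have N: "subspace N"
    unfolding N_def subspace_def by (simp add: matrix_vector_right_distrib matrix_vector_mult_scaleR)
  have "u \<in> N"
    using u by (simp add: N_def)
  have "r (x + v + u) \<le> r (x + v + u + d) + (g x + (1 / \<alpha>) *\<^sub>R u) \<bullet> d" if "d \<in> N" for d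
    using prox_subspace_first_order[OF r \<alpha> N \<open>u \<in> N\<close> that] min
    unfolding N_def u_obj_def by blast
  then obtain z where z: "is_subgrad r (x + v + u) z"
    and z_orth: "\<And>d. d \<in> N \<Longrightarrow> (z + (g x + (1 / \<alpha>) *\<^sub>R u)) \<bullet> d = 0"
    using is_subgrad_exists_orthogonal[OF r N] by blast
  have "norm z \<le> B"
    using B z by (simp add: add.assoc)
  then have zv: "z \<bullet> v \<le> B * norm v"
    by (meson norm_cauchy_schwarz mult_right_mono norm_ge_zero order_trans)
  have zu: "z \<bullet> u = - (g x \<bullet> u) - (norm u)\<^sup>2 / \<alpha>"
    using z_orth[OF \<open>u \<in> N\<close>] by (simp add: inner_add_left power2_norm_eq_inner algebra_simps)
  have r_diff: "r (x + (v + u)) - r x \<le> z \<bullet> v + z \<bullet> u"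
    using z unfolding is_subgrad_def
    by (auto simp: inner_diff_right inner_add_right algebra_simps dest: spec[of _ x])
  obtain y where "v = transpose Jx *v y"
    using v by blast
  then have "v \<bullet> u = 0"
    by (simp add: dot_lmul_matrix u)
  then have norm_s: "(norm (v + u))\<^sup>2 = (norm v)\<^sup>2 + (norm u)\<^sup>2"
    by (simp add: power2_norm_eq_inner inner_add_left inner_add_right inner_commute)
  have "D_val r g sigma_u \<alpha> x (v + u)
      \<le> g x \<bullet> v + g x \<bullet> u + (sigma_u + 1/2) * ((norm v)\<^sup>2 + (norm u)\<^sup>2) / \<alpha>
        + z \<bullet> v + z \<bullet> u"
    unfolding D_val_def norm_s using r_diff by (simp add: inner_add_right)
  also have "\<dots> = g x \<bullet> v + z \<bullet> v + (sigma_u + 1/2) * (norm v)\<^sup>2 / \<alpha>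
      + (sigma_u - 1/2) * (norm u)\<^sup>2 / \<alpha>"
    unfolding zu using \<alpha> by (simp add: field_simps)
  also have "\<dots> \<le> g x \<bullet> v + z \<bullet> v + (norm v)\<^sup>2 / \<alpha>"
  proof -
    have "(sigma_u + 1/2) * (norm v)\<^sup>2 \<le> 1 * (norm v)\<^sup>2"
      using sigma_u by (intro mult_right_mono) auto
    then have "(sigma_u + 1/2) * (norm v)\<^sup>2 / \<alpha> \<le> (norm v)\<^sup>2 / \<alpha>"
      using \<alpha> by (simp add: divide_right_mono)
    moreover have "(sigma_u - 1/2) * (norm u)\<^sup>2 / \<alpha> \<le> 0"
      using sigma_u \<alpha> by (intro divide_nonpos_pos mult_nonpos_nonneg) auto
    ultimately show ?thesis
      by linarith
  qed
  also have "\<dots> \<le> (norm (g x) + B) * norm v + (norm v)\<^sup>2 / \<alpha>"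
    using norm_cauchy_schwarz[of "g x" v] zv by (simp add: distrib_right)
  finally show ?thesis .
qed

lemma D_val_le_linear:
  fixes r :: "real^'n \<Rightarrow> real" and Jx :: "real^'n^'m"
  assumes r: "convex_on UNIV r" and \<alpha>: "\<alpha> > 0" and sigma_u: "sigma_u \<le> 1/2"
    and u: "Jx *v u = 0" and v: "v \<in> range (\<lambda>y. transpose Jx *v y)"
    and min: "\<And>w. Jx *v w = 0 \<Longrightarrow> u_obj r g \<alpha> x v u \<le> u_obj r g \<alpha> x v w"
    and B: "\<And>z. is_subgrad r (x + (v + u)) z \<Longrightarrow> norm z \<le> B" "0 \<le> B"
    and bounds: "norm v \<le> \<kappa> * \<alpha> * n" "0 \<le> n" "n \<le> L" "norm (g x) \<le> G"
  shows "D_val r g sigma_u \<alpha> x (v + u) \<le> \<alpha> * n * (\<kappa> * (G + B) + \<kappa>\<^sup>2 * L)"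
proof -
  have "0 \<le> G"
    using bounds(4) by (meson norm_ge_zero order_trans)
  then have "(norm (g x) + B) * norm v \<le> (G + B) * (\<kappa> * \<alpha> * n)"
    using bounds B(2) by (intro mult_mono) auto
  moreover have "(norm v)\<^sup>2 / \<alpha> \<le> \<kappa>\<^sup>2 * \<alpha> * n * L"
  proof -
    have "(norm v)\<^sup>2 \<le> (\<kappa> * \<alpha> * n)\<^sup>2"
      using bounds(1) by (simp add: power_mono)
    also have "\<dots> = \<kappa>\<^sup>2 * \<alpha>\<^sup>2 * n * n"
      by (simp add: power2_eq_square)
    also have "\<dots> \<le> \<kappa>\<^sup>2 * \<alpha>\<^sup>2 * n * L"
      using bounds by (intro mult_left_mono) auto
    finally have "(norm v)\<^sup>2 / \<alpha> \<le> \<kappa>\<^sup>2 * \<alpha>\<^sup>2 * n * L / \<alpha>"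
      using \<alpha> by (simp add: divide_right_mono)
    then show ?thesis
      using \<alpha> by (simp add: power2_eq_square)
  qed
  moreover have "(G + B) * (\<kappa> * \<alpha> * n) + \<kappa>\<^sup>2 * \<alpha> * n * L
      = \<alpha> * n * (\<kappa> * (G + B) + \<kappa>\<^sup>2 * L)"
    by (simp add: algebra_simps)
  ultimately show ?thesis
    using D_val_le[OF r \<alpha> sigma_u u v min B(1)] by linarith
qed

lemma arg_min_segment_decrease:
  fixes c w :: "'a::real_inner"
  assumes \<beta>: "is_arg_min (\<lambda>b. (1/2) * (norm (c - b *\<^sub>R w))\<^sup>2)
      (\<lambda>b. 0 \<le> b \<and> b \<le> b_max) \<beta>"
    and b: "0 \<le> b" "b \<le> b_max" "b * (norm w)\<^sup>2 \<le> c \<bullet> w"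
  shows "b * (c \<bullet> w) \<le> (norm c - norm (c - \<beta> *\<^sub>R w)) * (2 * norm c)"
proof -
  have "(1/2) * (norm (c - \<beta> *\<^sub>R w))\<^sup>2 \<le> (1/2) * (norm (c - b *\<^sub>R w))\<^sup>2"
    using \<beta> b unfolding is_arg_min_def by (meson not_le)
  then have "(norm (c - \<beta> *\<^sub>R w))\<^sup>2 \<le> (norm (c - b *\<^sub>R w))\<^sup>2"
    by simp
  also have "\<dots> = (norm c)\<^sup>2 - 2 * b * (c \<bullet> w) + b * (b * (norm w)\<^sup>2)"
    unfolding power2_norm_eq_inner
    by (simp add: inner_diff_left inner_diff_right inner_commute algebra_simps power2_eq_square)
  also have "\<dots> \<le> (norm c)\<^sup>2 - b * (c \<bullet> w)"
    using b mult_left_mono[OF b(3) b(1)] by simp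
  finally have decrease: "(norm (c - \<beta> *\<^sub>R w))\<^sup>2 \<le> (norm c)\<^sup>2 - b * (c \<bullet> w)" .
  moreover have "0 \<le> b * (c \<bullet> w)"
    using b by (meson mult_nonneg_nonneg zero_le_power2 order_trans)
  ultimately have "(norm (c - \<beta> *\<^sub>R w))\<^sup>2 \<le> (norm c)\<^sup>2"
    by linarith
  then have "norm (c - \<beta> *\<^sub>R w) \<le> norm c"
    by (rule power2_le_imp_le) simp
  have "b * (c \<bullet> w) \<le> (norm c - norm (c - \<beta> *\<^sub>R w)) * (norm c + norm (c - \<beta> *\<^sub>R w))"
    using decrease by (simp add: power2_eq_square algebra_simps)
  also have "\<dots> \<le> (norm c - norm (c - \<beta> *\<^sub>R w)) * (2 * norm c)"
    using \<open>norm (c - \<beta> *\<^sub>R w) \<le> norm c\<close> by (intro mult_left_mono) auto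
  finally show ?thesis .
qed

lemma normal_step_constraint_decrease:
  fixes Jx :: "real^'n^'m" and cx :: "real^'m"
  defines "a \<equiv> transpose Jx *v cx"
  assumes \<beta>: "is_arg_min (\<lambda>b. (1/2) * (norm (cx - b *\<^sub>R (Jx *v a)))\<^sup>2)
      (\<lambda>b. 0 \<le> b \<and> b \<le> b_max) \<beta>"
    and v: "norm (cx + Jx *v v) \<le> norm (cx + Jx *v (- (\<beta> *\<^sub>R a)))"
    and "0 \<le> b_max" "norm Jx \<le> M" "0 < M"
  shows "min b_max (1 / M\<^sup>2) * (norm a)\<^sup>2 \<le> (norm cx - norm (cx + Jx *v v)) * (2 * norm cx)"
proof -
  let ?b = "min b_max (1 / M\<^sup>2)"
  have cw: "cx \<bullet> (Jx *v a) = (norm a)\<^sup>2"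
    unfolding a_def power2_norm_eq_inner by (simp add: dot_lmul_matrix)
  have "norm (Jx *v a) \<le> M * norm a"
    using norm_matrix_vector_mult_le[of Jx a] \<open>norm Jx \<le> M\<close> by (meson mult_right_mono norm_ge_zero order_trans)
  then have "?b * (norm (Jx *v a))\<^sup>2 \<le> ?b * (M\<^sup>2 * (norm a)\<^sup>2)"
    using \<open>0 \<le> b_max\<close> by (intro mult_left_mono) (auto simp: power_mult_distrib[symmetric] power_mono)
  also have "\<dots> = (?b * M\<^sup>2) * (norm a)\<^sup>2"
    by simp
  also have "\<dots> \<le> (norm a)\<^sup>2"
  proof -
    have "?b * M\<^sup>2 \<le> (1 / M\<^sup>2) * M\<^sup>2"
      by (intro mult_right_mono) auto
    with \<open>0 < M\<close> show ?thesis
      using mult_right_mono[of "?b * M\<^sup>2" 1 "(norm a)\<^sup>2"] by simp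
  qed
  finally have "?b * (norm (Jx *v a))\<^sup>2 \<le> cx \<bullet> (Jx *v a)"
    unfolding cw .
  then have "?b * (norm a)\<^sup>2 \<le> (norm cx - norm (cx - \<beta> *\<^sub>R (Jx *v a))) * (2 * norm cx)"
    using arg_min_segment_decrease[OF \<beta>] \<open>0 \<le> b_max\<close> unfolding cw by simp
  moreover have "cx + Jx *v (- (\<beta> *\<^sub>R a)) = cx - \<beta> *\<^sub>R (Jx *v a)"
    by (simp add: matrix_vector_mult_scaleR flip: scaleR_minus_left)
  then have "(norm cx - norm (cx - \<beta> *\<^sub>R (Jx *v a))) * (2 * norm cx)
      \<le> (norm cx - norm (cx + Jx *v v)) * (2 * norm cx)"
    using v by (intro mult_right_mono) auto
  ultimately show ?thesis
    by linarith
qed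

lemma mult_min_le_min_mult:
  fixes \<alpha> \<alpha>0 \<kappa> M :: real
  assumes "0 < \<alpha>" "\<alpha> \<le> \<alpha>0" "0 < M"
  shows "\<alpha> * min \<kappa> (1 / (M\<^sup>2 * \<alpha>0)) \<le> min (\<kappa> * \<alpha>) (1 / M\<^sup>2)"
proof -
  have "\<alpha> * min \<kappa> (1 / (M\<^sup>2 * \<alpha>0)) \<le> \<alpha> * (1 / (M\<^sup>2 * \<alpha>0))"
    using assms(1) by (intro mult_left_mono) auto
  also have "\<dots> \<le> 1 / M\<^sup>2"
    using assms by (simp add: divide_simps)
  finally show ?thesis
    using assms(1) by (simp add: mult_left_mono mult.commute)
qed

lemma trial_ratio_lower_bound:
  fixes P D e n K C \<alpha> m b \<sigma> :: real
  assumes ratio: "(1 - \<sigma>) * e / D < P" and "0 < D" "D \<le> \<alpha> * n * K"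
    and e: "b * n\<^sup>2 \<le> e * (2 * C)" and "\<alpha> * m \<le> b"
    and pos: "0 < e" "0 < n" "0 < \<alpha>" "0 < K" "0 < C" and "\<sigma> < 1"
  shows "(1 - \<sigma>) * m / (2 * C * K) * n \<le> P"
proof -
  have "(1 - \<sigma>) * m / (2 * C * K) * n = (1 - \<sigma>) * (\<alpha> * m * n\<^sup>2) / (2 * C * (\<alpha> * n * K))"
    using pos by (simp add: field_simps power2_eq_square)
  also have "\<dots> \<le> (1 - \<sigma>) * (b * n\<^sup>2) / (2 * C * (\<alpha> * n * K))"
    using assms by (intro divide_right_mono mult_right_mono mult_left_mono) auto
  also have "\<dots> \<le> (1 - \<sigma>) * (e * (2 * C)) / (2 * C * (\<alpha> * n * K))"
    using assms by (intro divide_right_mono mult_left_mono) auto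
  also have "\<dots> = (1 - \<sigma>) * e / (\<alpha> * n * K)"
    using pos by simp
  also have "\<dots> \<le> (1 - \<sigma>) * e / D"
    using assms by (intro divide_left_mono) auto
  also have "\<dots> < P"
    by (rule ratio)
  finally show ?thesis
    by simp
qed

lemma tau_trial_infinite_if_no_normal_step:
  fixes r :: "real^'n \<Rightarrow> real" and J :: "real^'n \<Rightarrow> real^'n^'m"
  assumes r: "convex_on UNIV r" and \<alpha>: "\<alpha> > 0" and sigma_u: "sigma_u \<le> 1/2" and "v = 0"
    and u: "J x *v u = 0" and min: "\<And>w. J x *v w = 0 \<Longrightarrow> u_obj r g \<alpha> x v u \<le> u_obj r g \<alpha> x v w"
    and B: "\<And>z. is_subgrad r (x + (v + u)) z \<Longrightarrow> norm z \<le> B"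
  shows "tau_trial r g c J sigma_c sigma_u \<alpha> x v (v + u) = \<infinity>"
proof -
  have "v \<in> range (\<lambda>y. transpose (J x) *v y)"
    using \<open>v = 0\<close> by (metis matrix_vector_mult_0_right rangeI)
  then have "D_val r g sigma_u \<alpha> x (v + u) \<le> 0"
    using D_val_le[OF r \<alpha> sigma_u u _ min B] \<open>v = 0\<close> by simp
  then show ?thesis
    by (simp add: tau_trial_def)
qed

lemma tau_prev_lower_bound:
  fixes r :: "real^'n \<Rightarrow> real" and c :: "real^'n \<Rightarrow> real^'m" and J :: "real^'n \<Rightarrow> real^'n^'m"
    and x :: "real^'n"
  defines "a \<equiv> transpose (J x) *v c x"
  assumes r: "convex_on UNIV r"
    and sigma: "sigma_c < 1" "sigma_u \<le> 1/2"
    and \<alpha>: "0 < \<alpha>" "\<alpha> \<le> \<alpha>0" and \<kappa>: "0 < kappa_v"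
    and bounds: "norm (g x) \<le> G" "norm (c x) \<le> C" "norm (J x) \<le> M" "0 < M" "0 \<le> B"
      "\<And>z. is_subgrad r (x + (v + u)) z \<Longrightarrow> norm z \<le> B"
    and v: "v \<in> range (\<lambda>y. transpose (J x) *v y)" "norm v \<le> kappa_v * \<alpha> * norm a"
      "is_arg_min (\<lambda>b. (1/2) * (norm (c x - b *\<^sub>R (J x *v a)))\<^sup>2)
        (\<lambda>b. 0 \<le> b \<and> b \<le> kappa_v * \<alpha>) \<beta>"
      "norm (c x + J x *v v) \<le> norm (c x + J x *v (- (\<beta> *\<^sub>R a)))"
    and u: "J x *v u = 0" "\<And>w. J x *v w = 0 \<Longrightarrow> u_obj r g \<alpha> x v u \<le> u_obj r g \<alpha> x v w"
    and decrease: "tau_update eps_tau P (tau_trial r g c J sigma_c sigma_u \<alpha> x v (v + u)) < P"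
    and "a \<noteq> 0"
  shows "(1 - sigma_c) * min kappa_v (1 / (M\<^sup>2 * \<alpha>0))
      / (2 * C * (kappa_v * (G + B) + kappa_v\<^sup>2 * (M * C))) * norm a \<le> P"
proof -
  define K where "K = kappa_v * (G + B) + kappa_v\<^sup>2 * (M * C)"
  define m where "m = min kappa_v (1 / (M\<^sup>2 * \<alpha>0))"
  define b where "b = min (kappa_v * \<alpha>) (1 / M\<^sup>2)"
  define D where "D = D_val r g sigma_u \<alpha> x (v + u)"
  define e where "e = norm (c x) - norm (c x + J x *v v)"
  have a_pos: "0 < norm a"
    using \<open>a \<noteq> 0\<close> by simp
  have "norm a \<le> norm (J x) * norm (c x)"
    using norm_matrix_vector_mult_le[of "transpose (J x)" "c x"] unfolding a_def norm_transpose .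
  also have "\<dots> \<le> M * C"
    using bounds by (intro mult_mono) auto
  finally have a_le: "norm a \<le> M * C" .
  with a_pos bounds(4) have C_pos: "0 < C"
    by (smt (verit) mult_nonneg_nonpos)
  have K_pos: "0 < K"
    unfolding K_def using \<kappa> bounds C_pos order_trans[OF norm_ge_zero bounds(1)]
    by (intro add_nonneg_pos mult_nonneg_nonneg mult_pos_pos) auto
  have D_le: "D \<le> \<alpha> * norm a * K"
    unfolding D_def K_def
    using D_val_le_linear[OF r \<alpha>(1) sigma(2) u(1) v(1) u(2) bounds(6,5) v(2) _ a_le bounds(1)]
    by simp
  have "\<not> ereal P \<le> tau_trial r g c J sigma_c sigma_u \<alpha> x v (v + u)"
    using decrease by (auto simp: tau_update_def)
  then have D_pos: "0 < D" and ratio: "(1 - sigma_c) * e / D < P"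
    unfolding tau_trial_def D_def e_def by (auto split: if_splits)
  have "0 < b * (norm a)\<^sup>2"
    unfolding b_def using \<kappa> \<alpha> bounds a_pos by simp
  moreover have "b * (norm a)\<^sup>2 \<le> e * (2 * norm (c x))"
    using normal_step_constraint_decrease[where Jx = "J x" and cx = "c x", folded a_def, OF v(3,4)]
      \<kappa> \<alpha> bounds
    unfolding b_def e_def by simp
  ultimately have "0 < e"
    by (smt (verit) norm_ge_zero zero_less_mult_iff)
  have e_ge: "b * (norm a)\<^sup>2 \<le> e * (2 * C)"
    using \<open>b * (norm a)\<^sup>2 \<le> e * (2 * norm (c x))\<close> mult_left_mono[of "2 * norm (c x)" "2 * C" e]
      \<open>0 < e\<close> bounds(2) by linarith
  have "\<alpha> * m \<le> b"
    unfolding m_def b_def using \<alpha> bounds(4) by (rule mult_min_le_min_mult)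
  show ?thesis
    using trial_ratio_lower_bound[OF ratio D_pos D_le e_ge \<open>\<alpha> * m \<le> b\<close> \<open>0 < e\<close> a_pos \<alpha>(1)
        K_pos C_pos] sigma(1)
    unfolding K_def m_def by simp
qed

lemma step_sizes_bounded:
  fixes \<alpha> :: "nat \<Rightarrow> real"
  assumes "0 < \<alpha> 0" "0 < \<xi>" "\<xi> \<le> 1"
    and "\<And>k. \<alpha> (Suc k) = \<alpha> k \<or> \<alpha> (Suc k) = \<xi> * \<alpha> k"
  shows "0 < \<alpha> k \<and> \<alpha> k \<le> \<alpha> 0"
proof (induction k)
  case (Suc k)
  moreover have "0 < \<xi> * \<alpha> k" "\<xi> * \<alpha> k \<le> \<alpha> k"
    using Suc assms(2,3) by (simp_all add: mult_left_le_one_le)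
  ultimately show ?case
    using assms(4)[of k] by (smt (verit))
qed (use assms in simp)

theorem lemma3p9:
  fixes f r :: "real^'n \<Rightarrow> real"
    and g :: "real^'n \<Rightarrow> real^'n"
    and c :: "real^'n \<Rightarrow> real^'m"
    and J :: "real^'n \<Rightarrow> real^'n^'m"
    and kappa_v sigma_c eps_tau xi eta sigma_u tau_m1 :: real
    and x v u :: "nat \<Rightarrow> real^'n"
    and alpha tau :: "nat \<Rightarrow> real"
    and X :: "(real^'n) set"
  assumes mn: "CARD('m) \<le> CARD('n)"
    and f_deriv: "\<And>y. (f has_derivative (\<lambda>h. g y \<bullet> h)) (at y)"
    and g_cont: "continuous_on UNIV g"
    and c_deriv: "\<And>y. (c has_derivative (\<lambda>h. J y *v h)) (at y)"
    and J_cont: "continuous_on UNIV J"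
    and r_convex: "convex_on UNIV r"
    and r_nonneg: "\<And>y. r y \<ge> 0"
    and params: "kappa_v > 0" "0 < sigma_c" "sigma_c < 1" "0 < eps_tau" "eps_tau < 1"
      "0 < xi" "xi < 1" "0 < eta" "eta < 1" "0 < sigma_u" "sigma_u \<le> 1/2"
    and alpha0: "alpha 0 > 0"
    and tau_m1: "tau_m1 > 0"
    \<comment> \<open>Step 1 (nontermination: J_k^T c_k = 0 forces c_k = 0)\<close>
    and step1a: "\<And>k. transpose (J (x k)) *v c (x k) \<noteq> 0 \<Longrightarrow>
          v k \<in> range (\<lambda>y. transpose (J (x k)) *v y)
        \<and> norm (v k) \<le> kappa_v * alpha k * norm (transpose (J (x k)) *v c (x k))
        \<and> (\<exists>beta. is_arg_min
                    (\<lambda>b. (1/2) * (norm (c (x k) - b *\<^sub>R (J (x k) *v (transpose (J (x k)) *v c (x k)))))\<^sup>2)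
                    (\<lambda>b. 0 \<le> b \<and> b \<le> kappa_v * alpha k) beta
                \<and> norm (c (x k) + J (x k) *v v k)
                    \<le> norm (c (x k) + J (x k) *v (- (beta *\<^sub>R (transpose (J (x k)) *v c (x k))))))"
    and step1b: "\<And>k. transpose (J (x k)) *v c (x k) = 0 \<Longrightarrow> v k = 0 \<and> c (x k) = 0"
    \<comment> \<open>Step 2 (nontermination: s_k \<noteq> 0)\<close>
    and step2: "\<And>k. J (x k) *v u k = 0
        \<and> (\<forall>w. J (x k) *v w = 0 \<longrightarrow> u_obj r g (alpha k) (x k) (v k) (u k) \<le> u_obj r g (alpha k) (x k) (v k) w)"
    and nonterm_s: "\<And>k. v k + u k \<noteq> 0"
    \<comment> \<open>Step 3\<close>
    and step3: "\<And>k. tau k = tau_update eps_tau (if k = 0 then tau_m1 else tau (k - 1))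
        (tau_trial r g c J sigma_c sigma_u (alpha k) (x k) (v k) (v k + u k))"
    \<comment> \<open>Step 4\<close>
    and step4: "\<And>k. (merit (tau k) f r c (x k + (v k + u k)) \<le> merit (tau k) f r c (x k)
                   - eta * delta_q r g c J (alpha k) (x k) (v k + u k) (tau k)
           \<longrightarrow> x (Suc k) = x k + (v k + u k) \<and> alpha (Suc k) = alpha k)
        \<and> (\<not> merit (tau k) f r c (x k + (v k + u k)) \<le> merit (tau k) f r c (x k)
                   - eta * delta_q r g c J (alpha k) (x k) (v k + u k) (tau k)
           \<longrightarrow> x (Suc k) = x k \<and> alpha (Suc k) = xi * alpha k)"
    \<comment> \<open>Standing assumption\<close>
    and X_open: "open X" and X_convex: "convex X"
    and X_iter: "\<And>k. x k \<in> X" and X_trial: "\<And>k. x k + (v k + u k) \<in> X"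
    and f_bdd: "bdd_below (f ` X)"
    and g_bdd: "bounded (g ` X)"
    and g_lip: "\<exists>L. \<forall>a\<in>X. \<forall>b\<in>X. norm (g a - g b) \<le> L * norm (a - b)"
    and c_bdd: "bounded (c ` X)"
    and J_bdd: "bounded (J ` X)"
    and J_lip: "\<exists>L. \<forall>a\<in>X. \<forall>b\<in>X. norm (J a - J b) \<le> L * norm (a - b)"
    and subgrad_bdd: "\<exists>B. \<forall>y\<in>X. \<forall>z. is_subgrad r y z \<longrightarrow> norm z \<le> B"
  shows "(\<forall>k\<ge>1. transpose (J (x k)) *v c (x k) = 0 \<longrightarrow>
            tau_trial r g c J sigma_c sigma_u (alpha k) (x k) (v k) (v k + u k) = \<infinity>
            \<and> tau k = tau (k - 1))
       \<and> (\<exists>eps>0. \<forall>k\<ge>1. transpose (J (x k)) *v c (x k) \<noteq> 0 \<and> tau k < tau (k - 1) \<longrightarrow>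
            tau (k - 1) \<ge> eps * norm (transpose (J (x k)) *v c (x k)))"
proof -
  have "alpha (Suc k) = alpha k \<or> alpha (Suc k) = xi * alpha k" for k
    using step4[of k] by blast
  then have alpha: "0 < alpha k \<and> alpha k \<le> alpha 0" for k
    using step_sizes_bounded[where \<alpha> = alpha and \<xi> = xi] alpha0 params(6,7) by simp
  obtain G where G: "0 < G" "\<And>y. y \<in> X \<Longrightarrow> norm (g y) \<le> G"
    using g_bdd unfolding bounded_pos by blast
  obtain C where C: "0 < C" "\<And>y. y \<in> X \<Longrightarrow> norm (c y) \<le> C"
    using c_bdd unfolding bounded_pos by blast
  obtain M where M: "0 < M" "\<And>y. y \<in> X \<Longrightarrow> norm (J y) \<le> M"
    using J_bdd unfolding bounded_pos by blast
  obtain B where B: "0 \<le> B" "\<And>y z. y \<in> X \<Longrightarrow> is_subgrad r y z \<Longrightarrow> norm z \<le> B"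
    using subgrad_bdd by (meson max.cobounded1 max.coboundedI2)
  have tau_k: "tau k = tau_update eps_tau (tau (k - 1))
      (tau_trial r g c J sigma_c sigma_u (alpha k) (x k) (v k) (v k + u k))" if "k \<ge> 1" for k
    using step3[of k] that by simp
  have part1: "tau_trial r g c J sigma_c sigma_u (alpha k) (x k) (v k) (v k + u k) = \<infinity>
      \<and> tau k = tau (k - 1)" if k: "k \<ge> 1" and a0: "transpose (J (x k)) *v c (x k) = 0" for k
  proof -
    have "tau_trial r g c J sigma_c sigma_u (alpha k) (x k) (v k) (v k + u k) = \<infinity>"
      using tau_trial_infinite_if_no_normal_step[where x = "x k" and J = J, OF r_convex
          conjunct1[OF alpha[of k]] params(11) conjunct1[OF step1b[OF a0]] conjunct1[OF step2[of k]]
          mp[OF spec[OF conjunct2[OF step2[of k]]]] B(2)[OF X_trial[of k]]] .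
    then show ?thesis
      using tau_k[OF k] by (simp add: tau_update_def)
  qed
  define eps where "eps = (1 - sigma_c) * min kappa_v (1 / (M\<^sup>2 * alpha 0))
      / (2 * C * (kappa_v * (G + B) + kappa_v\<^sup>2 * (M * C)))"
  have "0 < eps"
    unfolding eps_def using params G(1) C(1) M(1) B(1) alpha0
    by (intro divide_pos_pos mult_pos_pos add_nonneg_pos mult_nonneg_nonneg) auto
  moreover have "eps * norm (transpose (J (x k)) *v c (x k)) \<le> tau (k - 1)"
    if k: "k \<ge> 1" and a_ne: "transpose (J (x k)) *v c (x k) \<noteq> 0" and dec: "tau k < tau (k - 1)"
    for k
    using step1a[OF a_ne] step2[of k] tau_k[OF k] dec a_ne unfolding eps_def
    by (elim conjE exE, intro tau_prev_lower_bound[where x = "x k" and c = c and J = J and g = g,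
          OF r_convex params(3,11) conjunct1[OF alpha[of k]] conjunct2[OF alpha[of k]] params(1)
          G(2)[OF X_iter[of k]] C(2)[OF X_iter[of k]] M(2)[OF X_iter[of k]] M(1) B(1)
          B(2)[OF X_trial[of k]]]) auto
  ultimately show ?thesis
    using part1 by blast
qed

end
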